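(* Let $(X,f)$ be a dynamical system and $\mathbf{a}=(a_1,\dots,a_r)\in\mathbb{N}^r_*$. The following are equivalent: (1) $(X,f)$ is $\Delta$-$\mathbf{a}$-transitive; (2) $(X,f)$ is $\mathcal{F}[\mathbf{a}]$-point transitive; (3) $Trans_{\mathcal{F}[\mathbf{a}]}(X,f)$ is residual in $X$.
   Context: A dynamical system is a pair $(X,f)$ with $X$ a compact metric space and $f:X\to X$ continuous. $\mathbb{N}=\{1,2,\dots\}$, $\mathbb{Z}_+=\{0,1,2,\dots\}$; $\mathbb{N}^r_*=\{(n_1,\dots,n_r)\in\mathbb{N}^r: n_1<\dots<n_r\}$. $N(x,U)=\{n\in\mathbb{N}: f^n(x)\in U\}$. For a family $\mathcal{F}$ of subsets of $\mathbb{N}$, $x$ is an $\mathcal{F}$-transitive point if $N(x,U)\in\mathcal{F}$ for every non-empty open $U\subset X$; $Trans_{\mathcal{F}}(X,f)$ is the set of such points; $(X,f)$ is $\mathcal{F}$-point transitive if it is non-empty. For a system $(Y,g)$, $y$ is a transitive point if its $\omega$-limit set equals $Y$. $(X,f)$ is $\Delta$-$\mathbf{a}$-transitive if there is $x\in X$ such that $(x,\dots,x)$ is a transitive point of $(X^r,f^{a_1}\times\dots\times f^{a_r})$. $\mathcal{F}[\mathbf{a}]$ is the collection of all $F\subset\mathbb{N}$ such that for every $(n_1,\dots,n_r)\in\mathbb{Z}_+^r$ there is $k\in\mathbb{N}$ with $ka_i+n_i\in F$ for all $i=1,\dots,r$. *)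

theory Defs
  imports "HOL-Analysis.Analysis"
begin

definition strict_incr_pos :: "nat list \<Rightarrow> bool" where
  "strict_incr_pos a \<longleftrightarrow> a \<noteq> [] \<and> sorted_wrt (<) a \<and> (\<forall>i<length a. a ! i \<ge> 1)"

definition omega_limit_in :: "'b topology \<Rightarrow> ('b \<Rightarrow> 'b) \<Rightarrow> 'b \<Rightarrow> 'b set" where
  "omega_limit_in T g y = {z \<in> topspace T. \<forall>V. openin T V \<and> z \<in> V \<longrightarrow> infinite {n. (g ^^ n) y \<in> V}}"

definition transitive_point_in :: "'b topology \<Rightarrow> ('b \<Rightarrow> 'b) \<Rightarrow> 'b \<Rightarrow> bool" where
  "transitive_point_in T g y \<longleftrightarrow> omega_limit_in T g y = topspace T"

text \<open>X^r with the product topology (points are extensional functions on {..<r}).\<close>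
definition power_top :: "'a::topological_space set \<Rightarrow> nat \<Rightarrow> (nat \<Rightarrow> 'a) topology" where
  "power_top X r = product_topology (\<lambda>i. top_of_set X) {..<r}"

definition prod_map :: "('a \<Rightarrow> 'a) \<Rightarrow> nat list \<Rightarrow> (nat \<Rightarrow> 'a) \<Rightarrow> (nat \<Rightarrow> 'a)" where
  "prod_map f a = (\<lambda>z. restrict (\<lambda>i. (f ^^ (a ! i)) (z i)) {..<length a})"

definition diag_point :: "nat \<Rightarrow> 'a \<Rightarrow> (nat \<Rightarrow> 'a)" where
  "diag_point r x = restrict (\<lambda>i. x) {..<r}"

definition Delta_a_transitive :: "'a::topological_space set \<Rightarrow> ('a \<Rightarrow> 'a) \<Rightarrow> nat list \<Rightarrow> bool" where
  "Delta_a_transitive X f a \<longleftrightarrow>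
     (\<exists>x\<in>X. transitive_point_in (power_top X (length a)) (prod_map f a) (diag_point (length a) x))"

definition hitting_times :: "('a \<Rightarrow> 'a) \<Rightarrow> 'a \<Rightarrow> 'a set \<Rightarrow> nat set" where
  "hitting_times f x U = {n. n \<ge> 1 \<and> (f ^^ n) x \<in> U}"

definition Fam_a :: "nat list \<Rightarrow> nat set set" where
  "Fam_a a = {F. F \<subseteq> {1..} \<and>
      (\<forall>n :: nat \<Rightarrow> nat. \<exists>k\<ge>1. \<forall>i<length a. k * a ! i + n i \<in> F)}"

definition Trans_F :: "nat set set \<Rightarrow> 'a::topological_space set \<Rightarrow> ('a \<Rightarrow> 'a) \<Rightarrow> 'a set" where
  "Trans_F \<F> X f = {x \<in> X. \<forall>U. openin (top_of_set X) U \<and> U \<noteq> {} \<longrightarrow> hitting_times f x U \<in> \<F>}"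

definition residual_in :: "'a::topological_space set \<Rightarrow> 'a set \<Rightarrow> bool" where
  "residual_in X S \<longleftrightarrow> S \<subseteq> X \<and>
     (\<exists>\<G>. countable \<G> \<and> (\<forall>G\<in>\<G>. openin (top_of_set X) G \<and> X \<subseteq> closure G) \<and> X \<inter> \<Inter>\<G> \<subseteq> S)"

end

theory Submission
  imports Defs
begin

(* Write r = length a.  By the definition of the product
   topology, the diagonal point (x,...,x) is transitive for
   f^{a_1} x ... x f^{a_r} iff x is "multiply recurrent": for all non-empty
   open U_1,...,U_r there are infinitely many m with f^{m a_i}(x) \<in> U_i for
   every i.  Using only continuity and the shift-invariance built into F[a],
   a point x \<in> X is multiply recurrent iff it is an F[a]-transitive point.
   This gives (1) <-> (2), even pointwise.
   For (2) -> (3): an F[a]-transitive point x0 has a dense orbit consisting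
   of F[a]-transitive points; the "return sets" of balls centred at orbit
   points (one for each radius 1/(m+1) and each finite list of shifts) form
   a countable family of open sets, dense because they contain the orbit,
   whose intersection consists of F[a]-transitive points.
   For (3) -> (2) we use the Baire category theorem in the compact space X. *)

lemma funpow_continuous_on:
  assumes "continuous_on X f" "f ` X \<subseteq> X"
  shows "continuous_on X (f ^^ n)" and "(f ^^ n) ` X \<subseteq> X"
proof -
  have "continuous_on X (f ^^ n) \<and> (f ^^ n) ` X \<subseteq> X"
  proof (induction n)
    case 0 then show ?case by simp
  next
    case (Suc n) then show ?case using assms
      by (auto intro!: continuous_on_compose2[of X f X "f ^^ n"] simp: image_subset_iff)
  qed
  then show "continuous_on X (f ^^ n)" "(f ^^ n) ` X \<subseteq> X" by auto
qed

lemma openin_funpow_preimage: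
  assumes "continuous_on X f" "f ` X \<subseteq> X" "openin (top_of_set X) U"
  shows "openin (top_of_set X) (X \<inter> (f ^^ n) -` U)"
  using funpow_continuous_on[OF assms(1,2), of n] assms(3)
  by (intro continuous_openin_preimage[of X "f ^^ n" X U]) auto

lemma prod_map_funpow_diag:
  "(prod_map f a ^^ m) (diag_point (length a) x) = restrict (\<lambda>i. (f ^^ (m * a ! i)) x) {..<length a}"
proof (induction m)
  case 0 then show ?case by (simp add: diag_point_def)
next
  case (Suc m) then show ?case by (auto simp: prod_map_def funpow_add)
qed

(* A point of X^r is transitive iff it visits every non-empty open box
   infinitely often: boxes form a base of the product topology. *)
lemma transitive_point_power_top_iff:
  "transitive_point_in (power_top X r) g z \<longleftrightarrow>
     (\<forall>U. (\<forall>i<r. openin (top_of_set X) (U i) \<and> U i \<noteq> {}) \<longrightarrow>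
          infinite {m. (g ^^ m) z \<in> PiE {..<r} U})"
proof
  assume tr: "transitive_point_in (power_top X r) g z"
  show "\<forall>U. (\<forall>i<r. openin (top_of_set X) (U i) \<and> U i \<noteq> {}) \<longrightarrow> infinite {m. (g ^^ m) z \<in> PiE {..<r} U}"
  proof (intro allI impI)
    fix U assume U: "\<forall>i<r. openin (top_of_set X) (U i) \<and> U i \<noteq> {}"
    have box_open: "openin (power_top X r) (PiE {..<r} U)"
      unfolding power_top_def using U by (simp add: openin_PiE_gen)
    define p where "p = restrict (\<lambda>i. SOME u. u \<in> U i) {..<r}"
    have p: "p \<in> PiE {..<r} U"
      unfolding p_def using U by (simp add: some_in_eq)
    then have "p \<in> omega_limit_in (power_top X r) g z"
      using tr openin_subset[OF box_open] unfolding transitive_point_in_def by blast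
    then show "infinite {m. (g ^^ m) z \<in> PiE {..<r} U}"
      using box_open p unfolding omega_limit_in_def by blast
  qed
next
  assume boxes: "\<forall>U. (\<forall>i<r. openin (top_of_set X) (U i) \<and> U i \<noteq> {}) \<longrightarrow>
                     infinite {m. (g ^^ m) z \<in> PiE {..<r} U}"
  have "p \<in> omega_limit_in (power_top X r) g z" if p: "p \<in> topspace (power_top X r)" for p
  proof -
    have "infinite {m. (g ^^ m) z \<in> V}" if V: "openin (power_top X r) V" "p \<in> V" for V
    proof -
      obtain U where U: "\<forall>i\<in>{..<r}. openin (top_of_set X) (U i)" "p \<in> PiE {..<r} U"
        and UV: "PiE {..<r} U \<subseteq> V"
        using V unfolding power_top_def openin_product_topology_alt by force
      have "\<forall>i<r. openin (top_of_set X) (U i) \<and> U i \<noteq> {}"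
        using U by (auto simp: PiE_iff)
      then have "infinite {m. (g ^^ m) z \<in> PiE {..<r} U}"
        using boxes by blast
      moreover have "{m. (g ^^ m) z \<in> PiE {..<r} U} \<subseteq> {m. (g ^^ m) z \<in> V}"
        using UV by blast
      ultimately show ?thesis
        using infinite_super by blast
    qed
    then show ?thesis using p unfolding omega_limit_in_def by blast
  qed
  then show "transitive_point_in (power_top X r) g z"
    unfolding transitive_point_in_def omega_limit_in_def by blast
qed

definition multiply_recurrent :: "'a::topological_space set \<Rightarrow> ('a \<Rightarrow> 'a) \<Rightarrow> nat list \<Rightarrow> 'a \<Rightarrow> bool" where
  "multiply_recurrent X f a x \<longleftrightarrow>
     (\<forall>U. (\<forall>i<length a. openin (top_of_set X) (U i) \<and> U i \<noteq> {}) \<longrightarrow>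
          infinite {m. \<forall>i<length a. (f ^^ (m * a ! i)) x \<in> U i})"

lemma diag_transitive_iff_multiply_recurrent:
  "transitive_point_in (power_top X (length a)) (prod_map f a) (diag_point (length a) x)
     \<longleftrightarrow> multiply_recurrent X f a x"
proof -
  have box: "restrict (\<lambda>i. (f ^^ (m * a ! i)) x) {..<length a} \<in> PiE {..<length a} U
               \<longleftrightarrow> (\<forall>i<length a. (f ^^ (m * a ! i)) x \<in> U i)" for m U
    by auto
  show ?thesis
    unfolding transitive_point_power_top_iff multiply_recurrent_def prod_map_funpow_diag box ..
qed

(* The only consequences of a \<in> N^r_* used below: r \<ge> 1 and every a_i \<ge> 1. *)
lemma strict_incr_posD:
  assumes "strict_incr_pos a"
  shows "0 < length a" and "\<And>i. i < length a \<Longrightarrow> 1 \<le> a ! i"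
  using assms unfolding strict_incr_pos_def by auto

lemma Fam_aD:
  assumes "F \<in> Fam_a a"
  shows "\<exists>k\<ge>1. \<forall>i<length a. k * a ! i + n i \<in> F"
  using assms unfolding Fam_a_def by blast

(* Every member of F[a] is non-empty (take all shifts equal to 0). *)
lemma Fam_a_member_nonempty:
  assumes "strict_incr_pos a" "F \<in> Fam_a a"
  shows "F \<noteq> {}"
proof -
  obtain k where "\<forall>i<length a. k * a ! i + 0 \<in> F"
    using Fam_aD[OF assms(2), of "\<lambda>_. 0"] by blast
  then show ?thesis using strict_incr_posD(1)[OF assms(1)] by blast
qed

(* F[a] is invariant under shifting back by s (shift the n_i by s). *)
lemma Fam_a_shift:
  assumes "strict_incr_pos a" "F \<in> Fam_a a"
  shows "{n. 1 \<le> n \<and> n + s \<in> F} \<in> Fam_a a"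
  unfolding Fam_a_def
proof (intro CollectI conjI allI)
  fix n :: "nat \<Rightarrow> nat"
  obtain k where k: "k \<ge> 1" "\<forall>i<length a. k * a ! i + (n i + s) \<in> F"
    using Fam_aD[OF assms(2), of "\<lambda>i. n i + s"] by blast
  have "k * a ! i + n i \<in> {n. 1 \<le> n \<and> n + s \<in> F}" if i: "i < length a" for i
  proof -
    have "1 \<le> k * a ! i"
      using k(1) strict_incr_posD(2)[OF assms(1) i] by simp
    then have "1 \<le> k * a ! i + n i" by linarith
    moreover have "k * a ! i + n i + s \<in> F"
      using k(2) i by (simp add: add.assoc)
    ultimately show ?thesis by simp
  qed
  then show "\<exists>k\<ge>1. \<forall>i<length a. k * a ! i + n i \<in> {n. 1 \<le> n \<and> n + s \<in> F}"
    using k(1) by blast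
qed auto

lemma Fam_a_lagged_multiples:
  assumes "strict_incr_pos a" "F \<in> Fam_a a"
  shows "\<exists>m\<ge>M. \<forall>i<length a. t i \<le> m * a ! i \<and> m * a ! i - t i \<in> F"
proof -
  define c where "c = M + (\<Sum>i<length a. t i)"
  have t_le: "t i \<le> m * a ! i" if "i < length a" "c \<le> m" for i m
  proof -
    have "t i \<le> (\<Sum>i<length a. t i)" using that(1) by (intro member_le_sum) auto
    also have "\<dots> \<le> m" using that(2) unfolding c_def by simp
    also have "m \<le> m * a ! i" using strict_incr_posD(2)[OF assms(1) that(1)] by simp
    finally show ?thesis .
  qed
  obtain k where "k \<ge> 1" and k: "\<forall>i<length a. k * a ! i + (c * a ! i - t i) \<in> F"
    using Fam_aD[OF assms(2), of "\<lambda>i. c * a ! i - t i"] by blast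
  have "t i \<le> (k + c) * a ! i \<and> (k + c) * a ! i - t i \<in> F" if "i < length a" for i
  proof -
    have "(k + c) * a ! i - t i = k * a ! i + (c * a ! i - t i)"
      using t_le[OF that, of c] by (simp add: algebra_simps)
    then show ?thesis using k that t_le[OF that, of "k + c"] by simp
  qed
  moreover have "M \<le> k + c" unfolding c_def by simp
  ultimately show ?thesis by blast
qed

section \<open>F[a]-transitive points are exactly the multiply recurrent points\<close>

lemma Trans_F_subset: "Trans_F F X f \<subseteq> X"
  unfolding Trans_F_def by blast

lemma Trans_F_memberD:
  assumes "x \<in> Trans_F F X f" "openin (top_of_set X) U" "U \<noteq> {}"
  shows "hitting_times f x U \<in> F"
  using assms unfolding Trans_F_def by blast

lemma multiply_recurrentD:
  assumes "multiply_recurrent X f a x"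
    and "\<And>i. i < length a \<Longrightarrow> openin (top_of_set X) (U i) \<and> U i \<noteq> {}"
  shows "infinite {m. \<forall>i<length a. (f ^^ (m * a ! i)) x \<in> U i}"
  using assms unfolding multiply_recurrent_def by blast

lemma multiply_recurrent_late_visit:
  assumes "strict_incr_pos a" "multiply_recurrent X f a x"
    and "openin (top_of_set X) U" "U \<noteq> {}"
  shows "\<exists>N\<ge>M. (f ^^ N) x \<in> U"
proof -
  have "infinite {m. \<forall>i<length a. (f ^^ (m * a ! i)) x \<in> U}"
    using multiply_recurrentD[OF assms(2), of "\<lambda>_. U"] assms(3,4) by blast
  then obtain m where "M \<le> m" "\<forall>i<length a. (f ^^ (m * a ! i)) x \<in> U"
    unfolding infinite_nat_iff_unbounded_le by blast
  moreover have "M \<le> m * a ! 0"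
    using \<open>M \<le> m\<close> strict_incr_posD[OF assms(1)] by (metis le_trans mult_le_mono2 mult_1_right)
  ultimately show ?thesis
    using strict_incr_posD(1)[OF assms(1)] by blast
qed

(* Given U and shifts n_i, the sets V_i = X \<inter> f^{-n_i}(U) are open and
   non-empty (by late visits of x to U); multiple recurrence into the V_i gives
   k \<ge> 1 with f^{k a_i + n_i}(x) \<in> U for all i. *)
lemma multiply_recurrent_imp_Trans_F:
  assumes cont: "continuous_on X f" and inv: "f ` X \<subseteq> X" and a: "strict_incr_pos a"
    and x: "x \<in> X" and rec: "multiply_recurrent X f a x"
  shows "x \<in> Trans_F (Fam_a a) X f"
  unfolding Trans_F_def
proof (intro CollectI conjI allI impI x)
  fix U assume U: "openin (top_of_set X) U \<and> U \<noteq> {}"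
  show "hitting_times f x U \<in> Fam_a a"
    unfolding Fam_a_def
  proof (intro CollectI conjI allI)
    fix n :: "nat \<Rightarrow> nat"
    define V where "V i = X \<inter> (f ^^ n i) -` U" for i
    have V_nonempty: "V i \<noteq> {}" for i
    proof -
      obtain N where N: "n i \<le> N" "(f ^^ N) x \<in> U"
        using multiply_recurrent_late_visit[OF a rec] U by blast
      then have "(f ^^ n i) ((f ^^ (N - n i)) x) \<in> U"
        by (simp flip: funpow_add[THEN fun_cong, unfolded comp_def])
      moreover have "(f ^^ (N - n i)) x \<in> X"
        using funpow_continuous_on(2)[OF cont inv] x by blast
      ultimately show ?thesis unfolding V_def by blast
    qed
    have "infinite {m. \<forall>i<length a. (f ^^ (m * a ! i)) x \<in> V i}"
      using multiply_recurrentD[OF rec, of V] V_nonempty openin_funpow_preimage[OF cont inv] U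
      unfolding V_def by blast
    then obtain m where m: "1 \<le> m" "\<forall>i<length a. (f ^^ (m * a ! i)) x \<in> V i"
      unfolding infinite_nat_iff_unbounded_le by blast
    have "m * a ! i + n i \<in> hitting_times f x U" if i: "i < length a" for i
    proof -
      have "(f ^^ (n i + m * a ! i)) x \<in> U"
        using m(2) i unfolding V_def by (simp add: funpow_add)
      moreover have "1 \<le> m * a ! i"
        using m(1) strict_incr_posD(2)[OF a i] by simp
      then have "1 \<le> m * a ! i + n i" by linarith
      ultimately show ?thesis
        unfolding hitting_times_def by (simp add: add.commute)
    qed
    then show "\<exists>k\<ge>1. \<forall>i<length a. k * a ! i + n i \<in> hitting_times f x U"
      using m(1) by blast
  qed (auto simp: hitting_times_def)
qed

lemma Trans_F_visit_times:
  assumes a: "strict_incr_pos a" and x: "x \<in> Trans_F (Fam_a a) X f"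
    and U: "\<forall>i<length a. openin (top_of_set X) (U i) \<and> U i \<noteq> {}"
  obtains t where "\<And>i. i < length a \<Longrightarrow> (f ^^ t i) x \<in> U i"
proof -
  have "\<exists>t. i < length a \<longrightarrow> (f ^^ t) x \<in> U i" for i
  proof (cases "i < length a")
    case True
    then have "openin (top_of_set X) (U i)" "U i \<noteq> {}"
      using U by auto
    then have "hitting_times f x (U i) \<noteq> {}"
      using Fam_a_member_nonempty[OF a Trans_F_memberD[OF x]] by blast
    then show ?thesis unfolding hitting_times_def by blast
  qed simp
  then show ?thesis using that by metis
qed

(* If x visits U_i at time t_i, the points W visiting every U_i at time t_i
   form an open neighbourhood of x; the return times of x to W lie in F[a],
   and absorbing the lags t_i yields infinitely many m with f^{m a_i}(x) in U_i. *)
lemma Trans_F_imp_multiply_recurrent: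
  assumes cont: "continuous_on X f" and inv: "f ` X \<subseteq> X" and a: "strict_incr_pos a"
    and x: "x \<in> Trans_F (Fam_a a) X f"
  shows "multiply_recurrent X f a x"
  unfolding multiply_recurrent_def
proof (intro allI impI)
  fix U assume U: "\<forall>i<length a. openin (top_of_set X) (U i) \<and> U i \<noteq> {}"
  obtain t where t: "\<And>i. i < length a \<Longrightarrow> (f ^^ t i) x \<in> U i"
    using Trans_F_visit_times[OF a x U] by blast
  define W where "W = (\<Inter>i<length a. X \<inter> (f ^^ t i) -` U i) \<inter> X"
  have "openin (top_of_set X) (X \<inter> (f ^^ t i) -` U i)" if "i \<in> {..<length a}" for i
    using openin_funpow_preimage[OF cont inv] U that by auto
  from openin_INT[OF finite_lessThan this]
  have "openin (top_of_set X) W" unfolding W_def by simp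
  moreover have "x \<in> W"
    unfolding W_def using t x Trans_F_subset by blast
  ultimately have W_hits: "hitting_times f x W \<in> Fam_a a"
    using Trans_F_memberD[OF x] by blast
  show "infinite {m. \<forall>i<length a. (f ^^ (m * a ! i)) x \<in> U i}"
    unfolding infinite_nat_iff_unbounded_le
  proof
    fix M
    obtain m where "M \<le> m"
      and m: "\<forall>i<length a. t i \<le> m * a ! i \<and> m * a ! i - t i \<in> hitting_times f x W"
      using Fam_a_lagged_multiples[OF a W_hits] by blast
    have "(f ^^ (m * a ! i)) x \<in> U i" if i: "i < length a" for i
    proof -
      have "(f ^^ (m * a ! i - t i)) x \<in> W"
        using m i unfolding hitting_times_def by blast
      then have "(f ^^ t i) ((f ^^ (m * a ! i - t i)) x) \<in> U i"
        using i unfolding W_def by blast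
      then show ?thesis
        using m i by (simp flip: funpow_add[THEN fun_cong, unfolded comp_def])
    qed
    then show "\<exists>m'\<ge>M. m' \<in> {m. \<forall>i<length a. (f ^^ (m * a ! i)) x \<in> U i}"
      using \<open>M \<le> m\<close> by blast
  qed
qed

lemma Trans_F_iff_multiply_recurrent:
  assumes "continuous_on X f" "f ` X \<subseteq> X" "strict_incr_pos a" "x \<in> X"
  shows "x \<in> Trans_F (Fam_a a) X f \<longleftrightarrow> multiply_recurrent X f a x"
  using multiply_recurrent_imp_Trans_F Trans_F_imp_multiply_recurrent assms by blast

section \<open>Residuality of the F[a]-transitive points\<close>

(* The forward orbit of an F[a]-transitive point consists of F[a]-transitive
   points, since F[a] is invariant under shifts. *)
lemma Trans_F_funpow:
  assumes cont: "continuous_on X f" and inv: "f ` X \<subseteq> X" and a: "strict_incr_pos a"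
    and x: "x \<in> Trans_F (Fam_a a) X f"
  shows "(f ^^ s) x \<in> Trans_F (Fam_a a) X f"
proof -
  have shift: "hitting_times f ((f ^^ s) x) U = {n. 1 \<le> n \<and> n + s \<in> hitting_times f x U}" for U
    unfolding hitting_times_def by (auto simp: funpow_add)
  have "(f ^^ s) x \<in> X"
    using funpow_continuous_on(2)[OF cont inv] x Trans_F_subset by blast
  moreover have "hitting_times f ((f ^^ s) x) U \<in> Fam_a a"
    if "openin (top_of_set X) U" "U \<noteq> {}" for U
    unfolding shift using Fam_a_shift[OF a Trans_F_memberD[OF x that]] .
  ultimately show ?thesis unfolding Trans_F_def by blast
qed

lemma Trans_F_orbit_dense:
  fixes X :: "'a::metric_space set"
  assumes a: "strict_incr_pos a" and x: "x \<in> Trans_F (Fam_a a) X f"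
  shows "X \<subseteq> closure (range (\<lambda>s. (f ^^ s) x))"
proof
  fix y assume y: "y \<in> X"
  have "\<exists>s. dist ((f ^^ s) x) y < e" if "e > 0" for e
  proof -
    have "openin (top_of_set X) (X \<inter> ball y e)" "X \<inter> ball y e \<noteq> {}"
      using y that by (auto simp: openin_open_Int)
    then have "hitting_times f x (X \<inter> ball y e) \<noteq> {}"
      using Fam_a_member_nonempty[OF a Trans_F_memberD[OF x]] by blast
    then show ?thesis unfolding hitting_times_def by (auto simp: dist_commute)
  qed
  then show "y \<in> closure (range (\<lambda>s. (f ^^ s) x))"
    unfolding closure_approachable by blast
qed

(* Points returning to U at the times k a_i + s_i for some common k \<ge> 1;
   the shifts s_i are given as a list so that there are countably many. *)
definition return_set :: "'a set \<Rightarrow> ('a \<Rightarrow> 'a) \<Rightarrow> nat list \<Rightarrow> nat list \<Rightarrow> 'a set \<Rightarrow> 'a set" where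
  "return_set X f a s U = {y \<in> X. \<exists>k\<ge>1. \<forall>i<length a. (f ^^ (k * a ! i + s ! i)) y \<in> U}"

lemma return_set_openin:
  assumes cont: "continuous_on X f" and inv: "f ` X \<subseteq> X" and U: "openin (top_of_set X) U"
  shows "openin (top_of_set X) (return_set X f a s U)"
proof -
  define R where "R k = (\<Inter>i<length a. X \<inter> (f ^^ (k * a ! i + s ! i)) -` U) \<inter> X" for k
  have "return_set X f a s U = (\<Union>k\<in>{1..}. R k)"
    unfolding return_set_def R_def by blast
  moreover have "openin (top_of_set X) (R k)" for k
  proof -
    have "openin (top_of_set X) (X \<inter> (f ^^ (k * a ! i + s ! i)) -` U)" for i
      using openin_funpow_preimage[OF cont inv U] .
    from openin_INT[OF finite_lessThan this] show ?thesis unfolding R_def by simp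
  qed
  ultimately show ?thesis by auto
qed

lemma Trans_F_subset_return_set:
  assumes "openin (top_of_set X) U" "U \<noteq> {}"
  shows "Trans_F (Fam_a a) X f \<subseteq> return_set X f a s U"
proof
  fix y assume y: "y \<in> Trans_F (Fam_a a) X f"
  obtain k where "k \<ge> 1" "\<forall>i<length a. k * a ! i + s ! i \<in> hitting_times f y U"
    using Fam_aD[OF Trans_F_memberD[OF y assms], of "\<lambda>i. s ! i"] by blast
  then show "y \<in> return_set X f a s U"
    using y Trans_F_subset unfolding return_set_def hitting_times_def by blast
qed

lemma openin_contains_dense_ball:
  fixes X :: "'a::metric_space set"
  assumes D: "X \<subseteq> closure D" and U: "openin (top_of_set X) U" "U \<noteq> {}"
  shows "\<exists>d\<in>D. \<exists>m::nat. X \<inter> ball d (1 / Suc m) \<subseteq> U"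
proof -
  obtain u where u: "u \<in> U" using U(2) by blast
  obtain e where e: "e > 0" "\<And>y. y \<in> X \<Longrightarrow> dist y u < e \<Longrightarrow> y \<in> U"
    using U(1) u unfolding openin_euclidean_subtopology_iff by meson
  obtain m :: nat where m: "inverse (real (Suc m)) < e / 2"
    using reals_Archimedean[of "e / 2"] e(1) by auto
  have "u \<in> closure D" using D u openin_subset[OF U(1)] by auto
  then obtain d where d: "d \<in> D" "dist d u < 1 / Suc m"
    unfolding closure_approachable by (meson of_nat_0_less_iff zero_less_Suc divide_pos_pos zero_less_one)
  have "X \<inter> ball d (1 / Suc m) \<subseteq> U"
  proof
    fix y assume y: "y \<in> X \<inter> ball d (1 / Suc m)"
    have "dist y u \<le> dist d y + dist d u" by (rule dist_triangle3)
    also have "\<dots> < 2 / Suc m" using y d(2) by (simp add: dist_commute)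
    also have "\<dots> < e" using m by (simp add: field_simps inverse_eq_divide)
    finally show "y \<in> U" using e(2) y by blast
  qed
  then show ?thesis using d(1) by blast
qed

lemma return_sets_imp_Trans_F:
  fixes X :: "'a::metric_space set"
  assumes a: "strict_incr_pos a" and D: "X \<subseteq> closure D" and y: "y \<in> X"
    and returns: "\<And>d m s. d \<in> D \<Longrightarrow> y \<in> return_set X f a s (X \<inter> ball d (1 / Suc m))"
  shows "y \<in> Trans_F (Fam_a a) X f"
  unfolding Trans_F_def
proof (intro CollectI conjI allI impI y)
  fix U assume U: "openin (top_of_set X) U \<and> U \<noteq> {}"
  then obtain d and m :: nat where d: "d \<in> D" and ball_U: "X \<inter> ball d (1 / Suc m) \<subseteq> U"
    using openin_contains_dense_ball[OF D] by blast
  show "hitting_times f y U \<in> Fam_a a"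
    unfolding Fam_a_def
  proof (intro CollectI conjI allI)
    fix n :: "nat \<Rightarrow> nat"
    obtain k where k: "k \<ge> 1"
      "\<forall>i<length a. (f ^^ (k * a ! i + map n [0..<length a] ! i)) y \<in> X \<inter> ball d (1 / Suc m)"
      using returns[OF d, of "map n [0..<length a]" m] unfolding return_set_def by blast
    have "k * a ! i + n i \<in> hitting_times f y U" if i: "i < length a" for i
    proof -
      have "(f ^^ (k * a ! i + n i)) y \<in> U"
        using k(2) i ball_U by auto
      moreover have "1 \<le> k * a ! i"
        using k(1) strict_incr_posD(2)[OF a i] by simp
      then have "1 \<le> k * a ! i + n i" by linarith
      ultimately show ?thesis unfolding hitting_times_def by blast
    qed
    then show "\<exists>k\<ge>1. \<forall>i<length a. k * a ! i + n i \<in> hitting_times f y U"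
      using k(1) by blast
  qed (auto simp: hitting_times_def)
qed

(* If the F[a]-transitive points contain a countable dense set D, they form a
   residual set: they contain the intersection of the countably many open sets
   return_set X f a s (X \<inter> ball d (1/(m+1))), d \<in> D, each of which is dense
   because it contains D. *)
lemma Trans_F_residual_if_countable_dense:
  fixes X :: "'a::metric_space set"
  assumes cont: "continuous_on X f" and inv: "f ` X \<subseteq> X" and a: "strict_incr_pos a"
    and "countable D" and D_Trans: "D \<subseteq> Trans_F (Fam_a a) X f" and D_dense: "X \<subseteq> closure D"
  shows "residual_in X (Trans_F (Fam_a a) X f)"
proof -
  define G where "G = (\<lambda>(d, m :: nat, s). return_set X f a s (X \<inter> ball d (1 / Suc m)))"
  define \<G> where "\<G> = G ` (D \<times> UNIV \<times> UNIV)"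
  have "countable \<G>"
    unfolding \<G>_def using \<open>countable D\<close> by (intro countable_image countable_SIGMA) auto
  moreover have "openin (top_of_set X) g \<and> X \<subseteq> closure g" if "g \<in> \<G>" for g
  proof -
    obtain d m s where d: "d \<in> D" and g: "g = return_set X f a s (X \<inter> ball d (1 / Suc m))"
      using \<open>g \<in> \<G>\<close> unfolding \<G>_def G_def by auto
    have ball_open: "openin (top_of_set X) (X \<inter> ball d (1 / Suc m))"
      by (simp add: openin_open_Int)
    have "d \<in> X"
      using d D_Trans Trans_F_subset[of "Fam_a a" X f] by blast
    then have "X \<inter> ball d (1 / Suc m) \<noteq> {}"
      by (metis IntI centre_in_ball empty_iff of_nat_0_less_iff zero_less_Suc divide_pos_pos zero_less_one)
    with ball_open have "D \<subseteq> g"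
      unfolding g using D_Trans Trans_F_subset_return_set by blast
    have "openin (top_of_set X) g"
      unfolding g using return_set_openin[OF cont inv ball_open] .
    then show ?thesis using D_dense closure_mono[OF \<open>D \<subseteq> g\<close>] by blast
  qed
  moreover have "X \<inter> \<Inter>\<G> \<subseteq> Trans_F (Fam_a a) X f"
  proof
    fix y assume "y \<in> X \<inter> \<Inter>\<G>"
    then show "y \<in> Trans_F (Fam_a a) X f"
      by (intro return_sets_imp_Trans_F[OF a D_dense]) (auto simp: \<G>_def G_def)
  qed
  ultimately show ?thesis
    unfolding residual_in_def using Trans_F_subset by blast
qed

lemma residual_in_nonempty:
  fixes X :: "'a::metric_space set"
  assumes X: "compact X" "X \<noteq> {}" and R: "residual_in X S"
  shows "S \<noteq> {}"
proof -
  obtain \<G> where "countable \<G>" and G: "\<And>G. G \<in> \<G> \<Longrightarrow> openin (top_of_set X) G \<and> X \<subseteq> closure G"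
    and sub: "X \<inter> \<Inter>\<G> \<subseteq> S"
    using R unfolding residual_in_def by blast
  have "locally_compact_space (top_of_set X) \<and> regular_space (top_of_set X)"
    using X(1) by (simp add: Hausdorff_space_subtopology compact_Hausdorff_imp_regular_space
      compact_imp_locally_compact_space compact_space_subtopology)
  then have "top_of_set X closure_of \<Inter>\<G> = topspace (top_of_set X)"
  proof (intro Baire_category disjI2 \<open>countable \<G>\<close>)
    fix T assume T: "T \<in> \<G>"
    have "T \<subseteq> X" using G[OF T] openin_subset by fastforce
    then show "openin (top_of_set X) T \<and> top_of_set X closure_of T = topspace (top_of_set X)"
      using G[OF T] by (auto simp: closure_of_subtopology Int_absorb1)
  qed
  then have "X \<inter> closure (X \<inter> \<Inter>\<G>) = X" by (simp add: closure_of_subtopology)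
  then have "X \<inter> \<Inter>\<G> \<noteq> {}" using X(2) by auto
  then show ?thesis using sub by blast
qed

theorem theorem5p6:
  fixes X :: "'a::metric_space set" and f :: "'a \<Rightarrow> 'a" and a :: "nat list"
  assumes "compact X" and "X \<noteq> {}" and "continuous_on X f" and "f ` X \<subseteq> X"
    and "strict_incr_pos a"
  shows "(Delta_a_transitive X f a \<longleftrightarrow> Trans_F (Fam_a a) X f \<noteq> {})
       \<and> (Trans_F (Fam_a a) X f \<noteq> {} \<longleftrightarrow> residual_in X (Trans_F (Fam_a a) X f))"
proof
  show "Delta_a_transitive X f a \<longleftrightarrow> Trans_F (Fam_a a) X f \<noteq> {}"
    unfolding Delta_a_transitive_def diag_transitive_iff_multiply_recurrent
    using Trans_F_iff_multiply_recurrent[OF assms(3-5)] Trans_F_subset by blast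
  have "residual_in X (Trans_F (Fam_a a) X f)" if "x0 \<in> Trans_F (Fam_a a) X f" for x0
  proof (rule Trans_F_residual_if_countable_dense[OF assms(3-5)])
    show "countable (range (\<lambda>s. (f ^^ s) x0))" by simp
    show "range (\<lambda>s. (f ^^ s) x0) \<subseteq> Trans_F (Fam_a a) X f"
      using Trans_F_funpow[OF assms(3-5) that] by blast
    show "X \<subseteq> closure (range (\<lambda>s. (f ^^ s) x0))"
      using Trans_F_orbit_dense[OF assms(5) that] .
  qed
  then show "Trans_F (Fam_a a) X f \<noteq> {} \<longleftrightarrow> residual_in X (Trans_F (Fam_a a) X f)"
    using residual_in_nonempty[OF assms(1,2)] by blast
qed

end
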